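(* Let $C\colon y^2=f(x)$ be a hyperelliptic curve over $K$ with $f(x)\in\mathcal O_K[x]$. If $d_{\mathcal R}=0$, $v(c_f)=0$ and there is no cluster $\mathfrak s\neq\mathcal R$ with $|\mathfrak s|>g+1$, then $y^2=f(x)$ is a minimal Weierstrass equation for $C$.
   Context: $K$ is a non-archimedean local field with ring of integers $\mathcal O_K$, finite residue field of characteristic $p\ne2$, valuation $v$ on $\bar K$ normalised on $K$. $f$ is separable of degree $2g+1$ or $2g+2$, $g\ge2$ the genus, with leading coefficient $c_f$ and roots $\mathcal R$. Clusters: non-empty $D\cap\mathcal R$ for discs $D=\{x\in\bar K:v(x-z)\ge d\}$; $d_{\mathcal R}=\min_{r,r'\in\mathcal R}v(r-r')$. The discriminant of $y^2=h(x)$ is $16^gc_h^{4g+2}\mathrm{disc}(h/c_h)$; an integral Weierstrass equation for $C$ is a $K$-isomorphic model $y^2=h(x)$, $h\in\mathcal O_K[x]$, and it is minimal if its discriminant has minimal valuation among all integral Weierstrass equations for $C$. *)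

theory Defs
  imports "HOL-Computational_Algebra.Polynomial" "HOL-Library.Extended_Real"
begin

text \<open>Ambient field: a type 'a playing the role of an algebraic closure of K;
  K is a subset of 'a; v is a valuation on 'a with values in ereal (v 0 = \<infinity>).\<close>

definition is_subfield :: "'a::field set \<Rightarrow> bool" where
  "is_subfield K \<longleftrightarrow> 0 \<in> K \<and> 1 \<in> K \<and>
     (\<forall>x\<in>K. \<forall>y\<in>K. x + y \<in> K \<and> x * y \<in> K \<and> - x \<in> K) \<and>
     (\<forall>x\<in>K. x \<noteq> 0 \<longrightarrow> inverse x \<in> K)"

definition alg_closed :: "'a::field itself \<Rightarrow> bool" where
  "alg_closed _ \<longleftrightarrow> (\<forall>p :: 'a poly. 0 < degree p \<longrightarrow> (\<exists>x. poly p x = 0))"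

definition algebraic_over :: "'a::field set \<Rightarrow> bool" where
  "algebraic_over K \<longleftrightarrow>
     (\<forall>x::'a. \<exists>p. p \<noteq> 0 \<and> set (coeffs p) \<subseteq> K \<and> poly p x = 0)"

definition is_valuation :: "('a::field \<Rightarrow> ereal) \<Rightarrow> bool" where
  "is_valuation v \<longleftrightarrow> (\<forall>x. v x = \<infinity> \<longleftrightarrow> x = 0) \<and>
     (\<forall>x y. v (x * y) = v x + v y) \<and>
     (\<forall>x y. v (x + y) \<ge> min (v x) (v y))"

definition v_cauchy :: "('a \<Rightarrow> ereal) \<Rightarrow> (nat \<Rightarrow> 'a::field) \<Rightarrow> bool" where
  "v_cauchy v a \<longleftrightarrow> (\<forall>N::real. \<exists>M. \<forall>m\<ge>M. \<forall>n\<ge>M. v (a m - a n) \<ge> ereal N)"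

definition v_converges_to :: "('a \<Rightarrow> ereal) \<Rightarrow> (nat \<Rightarrow> 'a::field) \<Rightarrow> 'a \<Rightarrow> bool" where
  "v_converges_to v a L \<longleftrightarrow> (\<forall>N::real. \<exists>M. \<forall>n\<ge>M. v (a n - L) \<ge> ereal N)"

text \<open>K is a non-archimedean local field inside its algebraic closure 'a, with valuation v
  on 'a normalised on K: K complete, v discrete and normalised on K (v(K^*) = Z),
  residue field O_K/m_K finite, of characteristic p \<noteq> 2 (i.e. 2 is a unit: v 2 = 0).\<close>

definition local_field_setup :: "'a::field set \<Rightarrow> ('a \<Rightarrow> ereal) \<Rightarrow> bool" where
  "local_field_setup K v \<longleftrightarrow>
     is_subfield K \<and> alg_closed TYPE('a) \<and> algebraic_over K \<and> is_valuation v \<and>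
     v ` (K - {0}) = {ereal (real_of_int n) | n. True} \<and>
     (\<forall>a. (\<forall>n. a n \<in> K) \<longrightarrow> v_cauchy v a \<longrightarrow> (\<exists>L\<in>K. v_converges_to v a L)) \<and>
     (\<exists>S. finite S \<and> S \<subseteq> {x\<in>K. v x \<ge> 0} \<and>
          (\<forall>x\<in>K. v x \<ge> 0 \<longrightarrow> (\<exists>s\<in>S. v (x - s) > 0))) \<and>
     v 2 = 0"

definition poly_roots :: "'a::field poly \<Rightarrow> 'a set" where
  "poly_roots f = {r. poly f r = 0}"

definition is_cluster :: "('a::field \<Rightarrow> ereal) \<Rightarrow> 'a poly \<Rightarrow> 'a set \<Rightarrow> bool" where
  "is_cluster v f s \<longleftrightarrow> s \<noteq> {} \<and>
     (\<exists>z::'a. \<exists>d::real. s = {r \<in> poly_roots f. v (r - z) \<ge> ereal d})"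

definition d_R :: "('a::field \<Rightarrow> ereal) \<Rightarrow> 'a poly \<Rightarrow> ereal" where
  "d_R v f = Min {v (r - r') | r r'. r \<in> poly_roots f \<and> r' \<in> poly_roots f}"

text \<open>Discriminant of a monic polynomial h, computed from its roots in the algebraically
  closed field: (-1)^(n(n-1)/2) prod_{r \<noteq> r'} (r - r') = prod_{i<j} (r_i - r_j)^2
  when h has n distinct roots, and 0 if h has a repeated root.\<close>

definition disc_monic :: "'a::field poly \<Rightarrow> 'a" where
  "disc_monic h = (if rsquarefree h then
      (-1) ^ (degree h * (degree h - 1) div 2) *
      (\<Prod>r\<in>poly_roots h. \<Prod>r'\<in>poly_roots h - {r}. (r - r'))
    else 0)"

definition weq_disc :: "nat \<Rightarrow> 'a::field poly \<Rightarrow> 'a" where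
  "weq_disc g h = 16 ^ g * lead_coeff h ^ (4 * g + 2) *
      disc_monic (smult (inverse (lead_coeff h)) h)"

text \<open>Change of Weierstrass model for a genus g hyperelliptic curve:
  x = (a x' + b)/(c x' + d), y = e y' / (c x' + d)^(g+1), with a,b,c,d,e \<in> K,
  ad - bc \<noteq> 0, e \<noteq> 0; the new equation is y'^2 = h(x') with
  h(x') = e^(-2) (c x' + d)^(2g+2) f((a x' + b)/(c x' + d)).\<close>

definition weq_transform :: "nat \<Rightarrow> 'a::field poly \<Rightarrow> 'a \<Rightarrow> 'a \<Rightarrow> 'a \<Rightarrow> 'a \<Rightarrow> 'a \<Rightarrow> 'a poly" where
  "weq_transform g f a b c d e = smult (inverse (e ^ 2))
     (\<Sum>i\<le>2 * g + 2. smult (coeff f i) ([:b, a:] ^ i * [:d, c:] ^ (2 * g + 2 - i)))"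

definition K_isomorphic_model :: "'a::field set \<Rightarrow> nat \<Rightarrow> 'a poly \<Rightarrow> 'a poly \<Rightarrow> bool" where
  "K_isomorphic_model K g f h \<longleftrightarrow>
     (\<exists>a\<in>K. \<exists>b\<in>K. \<exists>c\<in>K. \<exists>d\<in>K. \<exists>e\<in>K. a * d - b * c \<noteq> 0 \<and> e \<noteq> 0 \<and>
        h = weq_transform g f a b c d e)"

definition integral_poly :: "('a::field \<Rightarrow> ereal) \<Rightarrow> 'a poly \<Rightarrow> bool" where
  "integral_poly v h \<longleftrightarrow> (\<forall>i. v (coeff h i) \<ge> 0)"

definition minimal_weq :: "'a::field set \<Rightarrow> ('a \<Rightarrow> ereal) \<Rightarrow> nat \<Rightarrow> 'a poly \<Rightarrow> bool" where
  "minimal_weq K v g f \<longleftrightarrow> integral_poly v f \<and>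
     (\<forall>h. K_isomorphic_model K g f h \<longrightarrow> integral_poly v h \<longrightarrow>
          v (weq_disc g f) \<le> v (weq_disc g h))"

end

theory Submission
  imports Defs
begin

text \<open>Over the algebraic closure, \<open>f\<close> is \<open>c\<^sub>f\<close> times a product of \<open>2g + 2\<close> linear forms
  \<open>a\<^sub>j x + b\<^sub>j\<close>, one of them the constant \<open>1\<close> when \<open>deg f = 2g + 1\<close>, and the valuation of the
  discriminant is \<open>(4g + 2) v(c\<^sub>f)\<close> plus the sum of \<open>v(a\<^sub>j b\<^sub>k - a\<^sub>k b\<^sub>j)\<close> over ordered pairs
  \<open>j \<noteq> k\<close>. The change of model \<open>x = (a x' + b) / (c x' + d)\<close>, \<open>y = e y' / (c x' + d)\<^sup>g\<^sup>+\<^sup>1\<close>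
  acts on the forms by the matrix, multiplies each of these determinants by \<open>ad - bc\<close> and the
  constant by \<open>e\<^sup>-\<^sup>2\<close>, so it changes \<open>v(disc)\<close> by \<open>(4g + 2)((g + 1) v(ad - bc) - 2 v(e))\<close>.
  By Gauss's lemma the new model is integral only if \<open>-2 v(e) + \<Sum>\<^sub>j \<mu>\<^sub>j \<ge> 0\<close>, where \<open>\<mu>\<^sub>j\<close> is
  the content of the \<open>j\<close>-th transformed form. Finally \<open>\<mu>\<^sub>j + \<mu>\<^sub>k \<le> v(ad - bc)\<close> unless the
  \<open>j\<close>-th and \<open>k\<close>-th roots are \<open>v\<close>-close, and as \<open>d\<^sub>R = 0\<close> and no proper cluster has more than
  \<open>g + 1\<close> roots, every root is close to at most \<open>g + 1\<close> of the \<open>2g + 2\<close> roots (itself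
  included); a counting argument then bounds \<open>\<Sum>\<^sub>j \<mu>\<^sub>j\<close> by \<open>(g + 1) v(ad - bc)\<close>.\<close>

section \<open>Valuations\<close>

lemma ereal_add_le_less:
  fixes a b c d :: ereal
  assumes "a \<le> b" "c < d" "\<bar>a\<bar> \<noteq> \<infinity>" "\<bar>c\<bar> \<noteq> \<infinity>" "b \<noteq> -\<infinity>"
  shows "a + c < b + d"
  using assms by (cases a; cases b; cases c; cases d) auto

locale odd_residue_valuation =
  fixes v :: "'a::field \<Rightarrow> ereal"
  assumes is_valuation: "is_valuation v" and v_two: "v 2 = 0"
begin

text \<open>The real value of \<open>v\<close>; its junk value at \<open>0\<close>, where \<open>v 0 = \<infinity>\<close>, is \<open>0\<close>.\<close>

definition val :: "'a \<Rightarrow> real" where "val x = real_of_ereal (v x)"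

lemma v_mult: "v (x * y) = v x + v y"
  using is_valuation unfolding is_valuation_def by blast

lemma v_add: "min (v x) (v y) \<le> v (x + y)"
  using is_valuation unfolding is_valuation_def by blast

lemma v_eq_infinity_iff: "v x = \<infinity> \<longleftrightarrow> x = 0"
  using is_valuation unfolding is_valuation_def by blast

lemma v_zero [simp]: "v 0 = \<infinity>"
  using v_eq_infinity_iff by blast

lemma two_neq_zero: "(2::'a) \<noteq> 0"
  using v_two by force

lemma v_one [simp]: "v 1 = 0"
  using v_mult[of 2 1] v_two by simp

lemma v_neq_minf: "v x \<noteq> -\<infinity>"
proof
  assume minf: "v x = -\<infinity>"
  then have "x \<noteq> 0" by auto
  then have "v 2 = v x + v (2 / x)" "v (2 / x) \<noteq> \<infinity>"
    using v_mult[of x "2 / x"] two_neq_zero v_eq_infinity_iff by auto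
  then show False using minf v_two by (cases "v (2 / x)") auto
qed

lemma v_eq_val: "x \<noteq> 0 \<Longrightarrow> v x = ereal (val x)"
  unfolding val_def using v_neq_minf v_eq_infinity_iff by (cases "v x") auto

lemma v_finite: "x \<noteq> 0 \<Longrightarrow> \<bar>v x\<bar> \<noteq> \<infinity>"
  using v_eq_val by auto

lemma v_minus_one [simp]: "v (-1) = 0"
  using v_mult[of "-1" "-1"] v_eq_val[of "-1"] by (simp add: ereal_eq_0(1))

lemma v_minus [simp]: "v (- x) = v x"
  using v_mult[of "-1" x] by simp

lemma v_diff: "min (v x) (v y) \<le> v (x - y)"
  using v_add[of x "- y"] by simp

lemma v_add_eq_left:
  assumes "v x < v y"
  shows "v (x + y) = v x"
proof (rule antisym)
  have "min (v (x + y)) (v y) \<le> v x"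
    using v_add[of "x + y" "- y"] by simp
  then show "v (x + y) \<le> v x"
    using assms by (auto simp: min_def split: if_splits)
qed (use v_add[of x y] assms in simp)

lemma val_mult: "x \<noteq> 0 \<Longrightarrow> y \<noteq> 0 \<Longrightarrow> val (x * y) = val x + val y"
  using v_mult[of x y] v_eq_val by (metis mult_eq_0_iff plus_ereal.simps(1) ereal.inject)

lemma val_one [simp]: "val 1 = 0"
  by (simp add: val_def)

lemma val_minus [simp]: "val (- x) = val x"
  by (simp add: val_def)

lemma val_inverse: "x \<noteq> 0 \<Longrightarrow> val (inverse x) = - val x"
  using val_mult[of x "inverse x"] by (simp add: val_def)

lemma val_divide: "x \<noteq> 0 \<Longrightarrow> y \<noteq> 0 \<Longrightarrow> val (x / y) = val x - val y"
  by (simp add: divide_inverse val_mult val_inverse)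

lemma val_power: "x \<noteq> 0 \<Longrightarrow> val (x ^ n) = n * val x"
  by (induction n) (auto simp: val_mult algebra_simps)

lemma val_prod:
  "finite A \<Longrightarrow> (\<And>i. i \<in> A \<Longrightarrow> f i \<noteq> 0) \<Longrightarrow> val (\<Prod>i\<in>A. f i) = (\<Sum>i\<in>A. val (f i))"
  by (induction A rule: finite_induct) (auto simp: val_mult)

lemma val_16_power: "val (16 ^ n) = 0"
proof -
  have "(16::'a) ^ n = 2 ^ (4 * n)" by (simp add: power_mult)
  then show ?thesis using val_power[of 2] two_neq_zero v_two by (simp add: val_def)
qed

end

section \<open>Gauss's lemma for products of linear forms\<close>

definition lin_form :: "'a::field \<times> 'a \<Rightarrow> 'a poly" where
  "lin_form p = [:snd p, fst p:]"

definition form_det :: "'a::field \<times> 'a \<Rightarrow> 'a \<times> 'a \<Rightarrow> 'a" where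
  "form_det p q = fst p * snd q - snd p * fst q"

lemma coeff_lin_form_mult:
  "coeff (lin_form (a, b) * p) i = b * coeff p i + (if i = 0 then 0 else a * coeff p (i - 1))"
proof -
  have "lin_form (a, b) * p = smult b p + pCons 0 (smult a p)"
    by (simp add: lin_form_def mult_pCons_left)
  then show ?thesis by (cases i) auto
qed

context odd_residue_valuation
begin

definition form_content :: "'a \<times> 'a \<Rightarrow> ereal" where
  "form_content p = min (v (fst p)) (v (snd p))"

definition has_content :: "'a poly \<Rightarrow> ereal \<Rightarrow> bool" where
  "has_content p W \<longleftrightarrow> (\<forall>i. W \<le> v (coeff p i)) \<and> (\<exists>i. v (coeff p i) = W)"

lemma form_content_finite: "p \<noteq> (0, 0) \<Longrightarrow> \<bar>form_content p\<bar> \<noteq> \<infinity>"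
  unfolding form_content_def using v_neq_minf v_eq_infinity_iff
  by (cases p) (auto simp: min_def)

lemma form_content_le_v_form_det: "form_content p + form_content q \<le> v (form_det p q)"
proof -
  have "form_content p + form_content q \<le> v (fst p * snd q)"
       "form_content p + form_content q \<le> v (snd p * fst q)"
    unfolding form_content_def v_mult by (intro add_mono; simp)+
  moreover have "min (v (fst p * snd q)) (v (snd p * fst q)) \<le> v (form_det p q)"
    unfolding form_det_def by (rule v_diff)
  ultimately show ?thesis by (meson min.bounded_iff order_trans)
qed

lemma content_lower_bound_lin_form_mult:
  assumes "\<forall>i. W \<le> v (coeff p i)"
  shows "form_content (a, b) + W \<le> v (coeff (lin_form (a, b) * p) i)"
proof -
  have b_term: "form_content (a, b) + W \<le> v (b * coeff p i)"
    using assms by (simp add: v_mult form_content_def add_mono)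
  show ?thesis
  proof (cases "i = 0")
    case False
    have "form_content (a, b) + W \<le> v (a * coeff p (i - 1))"
      using assms by (simp add: v_mult form_content_def add_mono)
    moreover have "min (v (b * coeff p i)) (v (a * coeff p (i - 1))) \<le> v (coeff (lin_form (a, b) * p) i)"
      using False v_add by (simp add: coeff_lin_form_mult)
    ultimately show ?thesis using b_term by (meson min.bounded_iff order_trans)
  qed (use b_term in \<open>simp add: coeff_lin_form_mult\<close>)
qed

lemma has_content_less:
  "has_content p W \<Longrightarrow> v (coeff p i) \<noteq> W \<Longrightarrow> W < v (coeff p i)"
  by (auto simp: has_content_def order_less_le)

lemma finite_content_indices:
  assumes "\<bar>W\<bar> \<noteq> \<infinity>"
  shows "finite {i. v (coeff p i) = W}"
proof (rule finite_subset)
  show "{i. v (coeff p i) = W} \<subseteq> {..degree p}"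
    using assms by (auto simp: coeff_eq_0 not_le intro: ccontr)
qed simp

text \<open>The coefficient of the product next to the extreme coefficient of \<open>p\<close> of minimal
  valuation has no cancellation.\<close>

lemma content_attained_lin_form_mult_left:
  assumes "has_content p W" "\<bar>W\<bar> \<noteq> \<infinity>" "v a \<le> v b" "a \<noteq> 0"
  shows "\<exists>i. v (coeff (lin_form (a, b) * p) i) = v a + W"
proof -
  define Z where "Z = {i. v (coeff p i) = W}"
  have Z: "finite Z" "Z \<noteq> {}"
    using assms(1,2) finite_content_indices unfolding Z_def has_content_def by auto
  define I where "I = Max Z"
  have "Suc I \<notin> Z" using Max_ge[OF Z(1)] I_def by fastforce
  then have "W < v (coeff p (Suc I))"
    using has_content_less[OF assms(1)] by (simp add: Z_def)
  then have "v a + W < v b + v (coeff p (Suc I))"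
    by (rule ereal_add_le_less[OF assms(3)]) (use assms(2) v_finite[OF assms(4)] v_neq_minf in auto)
  moreover have a_term: "v (a * coeff p I) = v a + W"
    using Max_in[OF Z] I_def by (simp add: Z_def v_mult)
  ultimately have less: "v (a * coeff p I) < v (b * coeff p (Suc I))"
    by (simp only: v_mult[of b])
  have "v (a * coeff p I + b * coeff p (Suc I)) = v a + W"
    unfolding v_add_eq_left[OF less] a_term ..
  moreover have "coeff (lin_form (a, b) * p) (Suc I) = a * coeff p I + b * coeff p (Suc I)"
    by (simp add: coeff_lin_form_mult)
  ultimately show ?thesis by metis
qed

lemma content_attained_lin_form_mult_right:
  assumes "has_content p W" "\<bar>W\<bar> \<noteq> \<infinity>" "v b < v a"
  shows "\<exists>i. v (coeff (lin_form (a, b) * p) i) = v b + W"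
proof -
  have "b \<noteq> 0" using assms(3) by auto
  define Z where "Z = {i. v (coeff p i) = W}"
  have Z: "finite Z" "Z \<noteq> {}"
    using assms(1,2) finite_content_indices unfolding Z_def has_content_def by auto
  define I where "I = Min Z"
  have b_term: "v (b * coeff p I) = v b + W"
    using Min_in[OF Z] I_def by (simp add: Z_def v_mult)
  show ?thesis
  proof (cases "I = 0")
    case True
    then show ?thesis
      using b_term by (intro exI[of _ 0]) (simp add: coeff_lin_form_mult)
  next
    case False
    have "I - 1 \<notin> Z" using Min_le[OF Z(1)] I_def False by fastforce
    then have "W < v (coeff p (I - 1))"
      using has_content_less[OF assms(1)] by (simp add: Z_def)
    then have "v b + W < v a + v (coeff p (I - 1))"
      by (rule ereal_add_le_less[OF less_imp_le[OF assms(3)]])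
        (use assms(2) v_finite[OF \<open>b \<noteq> 0\<close>] v_neq_minf in auto)
    then have less: "v (b * coeff p I) < v (a * coeff p (I - 1))"
      unfolding b_term v_mult[of a] .
    have "v (b * coeff p I + a * coeff p (I - 1)) = v b + W"
      unfolding v_add_eq_left[OF less] b_term ..
    moreover have "coeff (lin_form (a, b) * p) I = b * coeff p I + a * coeff p (I - 1)"
      using False by (simp add: coeff_lin_form_mult)
    ultimately show ?thesis by metis
  qed
qed

lemma has_content_lin_form_mult:
  assumes "has_content p W" "\<bar>W\<bar> \<noteq> \<infinity>" "(a, b) \<noteq> (0, 0)"
  shows "has_content (lin_form (a, b) * p) (form_content (a, b) + W)"
proof -
  have "\<exists>i. v (coeff (lin_form (a, b) * p) i) = form_content (a, b) + W"
  proof (cases "v a \<le> v b")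
    case True
    have "a \<noteq> 0"
    proof
      assume "a = 0"
      then have "b = 0" using True v_eq_infinity_iff by simp
      with \<open>a = 0\<close> assms(3) show False by simp
    qed
    moreover have "form_content (a, b) = v a"
      using True by (simp add: form_content_def min_absorb1)
    ultimately show ?thesis
      using content_attained_lin_form_mult_left[OF assms(1,2) True] by simp
  next
    case False
    then have "v b < v a" by simp
    moreover have "form_content (a, b) = v b"
      using False by (simp add: form_content_def min_absorb2)
    ultimately show ?thesis
      using content_attained_lin_form_mult_right[OF assms(1,2)] by simp
  qed
  moreover have "\<forall>i. W \<le> v (coeff p i)"
    using assms(1) by (simp add: has_content_def)
  then have "\<forall>i. form_content (a, b) + W \<le> v (coeff (lin_form (a, b) * p) i)"
    using content_lower_bound_lin_form_mult by blast
  ultimately show ?thesis by (simp add: has_content_def)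
qed

lemma has_content_prod_lin_form:
  assumes "finite J" "\<And>j. j \<in> J \<Longrightarrow> q j \<noteq> (0, 0)"
  shows "has_content (\<Prod>j\<in>J. lin_form (q j)) (\<Sum>j\<in>J. form_content (q j))
    \<and> \<bar>\<Sum>j\<in>J. form_content (q j)\<bar> \<noteq> \<infinity>"
  using assms
proof (induction J rule: finite_induct)
  case empty
  have "has_content 1 0"
    unfolding has_content_def by (auto simp: coeff_1 intro!: exI[of _ 0])
  then show ?case by simp
next
  case (insert j J)
  have "q j \<noteq> (0, 0)" using insert.prems by simp
  have IH: "has_content (\<Prod>j\<in>J. lin_form (q j)) (\<Sum>j\<in>J. form_content (q j))"
    "\<bar>\<Sum>j\<in>J. form_content (q j)\<bar> \<noteq> \<infinity>"
    using insert by auto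
  obtain a b where q_j: "q j = (a, b)" by fastforce
  have "has_content (lin_form (q j) * (\<Prod>j\<in>J. lin_form (q j)))
      (form_content (q j) + (\<Sum>j\<in>J. form_content (q j)))"
    using has_content_lin_form_mult[OF IH] \<open>q j \<noteq> (0, 0)\<close> unfolding q_j .
  moreover have "\<bar>form_content (q j) + (\<Sum>j\<in>J. form_content (q j))\<bar> \<noteq> \<infinity>"
    using IH form_content_finite[OF \<open>q j \<noteq> (0, 0)\<close>]
    by (cases "form_content (q j)"; cases "\<Sum>j\<in>J. form_content (q j)") auto
  ultimately show ?case
    using insert.hyps by simp
qed

end

section \<open>Changes of model and linear forms\<close>

definition homog_subst :: "nat \<Rightarrow> 'a::field poly \<Rightarrow> 'a poly \<Rightarrow> 'a poly \<Rightarrow> 'a poly" where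
  "homog_subst N p A B = (\<Sum>i\<le>N. smult (coeff p i) (A ^ i * B ^ (N - i)))"

text \<open>The linear form \<open>p\<close> evaluated at \<open>x = (a x' + b) / (c x' + d)\<close> and multiplied by
  \<open>c x' + d\<close>.\<close>

definition subst_form :: "'a::field \<Rightarrow> 'a \<Rightarrow> 'a \<Rightarrow> 'a \<Rightarrow> 'a \<times> 'a \<Rightarrow> 'a \<times> 'a" where
  "subst_form a b c d p = (fst p * a + snd p * c, fst p * b + snd p * d)"

lemma homog_subst_smult: "homog_subst N (smult c p) A B = smult c (homog_subst N p A B)"
proof -
  have "smult c (\<Sum>i\<in>I. P i) = (\<Sum>i\<in>I. smult c (P i))" for I and P :: "nat \<Rightarrow> 'a poly"
    by (induction I rule: infinite_finite_induct) (simp_all add: smult_add_right)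
  then show ?thesis by (simp add: homog_subst_def)
qed

lemma homog_subst_lin_form_mult:
  assumes "degree p \<le> M"
  shows "homog_subst (Suc M) (lin_form (a, b) * p) A B = (smult a A + smult b B) * homog_subst M p A B"
proof -
  have "homog_subst (Suc M) (lin_form (a, b) * p) A B =
      (\<Sum>i\<le>Suc M. smult (b * coeff p i) (A ^ i * B ^ (Suc M - i))) +
      (\<Sum>i\<le>Suc M. smult (if i = 0 then 0 else a * coeff p (i - 1)) (A ^ i * B ^ (Suc M - i)))"
    unfolding homog_subst_def coeff_lin_form_mult by (simp add: smult_add_left sum.distrib)
  also have "(\<Sum>i\<le>Suc M. smult (b * coeff p i) (A ^ i * B ^ (Suc M - i))) =
      (\<Sum>i\<le>M. smult (b * coeff p i) (A ^ i * B ^ (Suc M - i)))"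
    using assms by (simp add: coeff_eq_0)
  also have "\<dots> = smult b B * homog_subst M p A B"
    unfolding homog_subst_def sum_distrib_left
    by (rule sum.cong) (auto simp: Suc_diff_le algebra_simps)
  also have "(\<Sum>i\<le>Suc M. smult (if i = 0 then 0 else a * coeff p (i - 1)) (A ^ i * B ^ (Suc M - i))) =
      (\<Sum>i\<le>M. smult (a * coeff p i) (A ^ Suc i * B ^ (M - i)))"
    by (subst sum.atMost_Suc_shift) simp
  also have "\<dots> = smult a A * homog_subst M p A B"
    unfolding homog_subst_def sum_distrib_left
    by (rule sum.cong) (auto simp: algebra_simps)
  finally show ?thesis by (simp add: algebra_simps)
qed

lemma degree_lin_form_le: "degree (lin_form p) \<le> 1"
  by (simp add: lin_form_def degree_pCons_le)

lemma degree_prod_lin_form_le: "finite J \<Longrightarrow> degree (\<Prod>j\<in>J. lin_form (q j)) \<le> card J"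
proof (induction J rule: finite_induct)
  case (insert j J)
  have "degree (lin_form (q j) * (\<Prod>j\<in>J. lin_form (q j)))
      \<le> degree (lin_form (q j)) + degree (\<Prod>j\<in>J. lin_form (q j))"
    by (rule degree_mult_le)
  also have "\<dots> \<le> 1 + card J" using insert.IH degree_lin_form_le by (rule add_mono[rotated])
  finally show ?case using insert.hyps by simp
qed simp

lemma homog_subst_prod_lin_form:
  assumes "finite J"
  shows "homog_subst (card J) (\<Prod>j\<in>J. lin_form (q j)) A B =
    (\<Prod>j\<in>J. smult (fst (q j)) A + smult (snd (q j)) B)"
  using assms
proof (induction J rule: finite_induct)
  case (insert j J)
  obtain a b where q_j: "q j = (a, b)" by fastforce
  have "homog_subst (Suc (card J)) (lin_form (a, b) * (\<Prod>j\<in>J. lin_form (q j))) A B =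
      (smult a A + smult b B) * homog_subst (card J) (\<Prod>j\<in>J. lin_form (q j)) A B"
    by (rule homog_subst_lin_form_mult[OF degree_prod_lin_form_le[OF insert.hyps(1)]])
  then show ?case using insert q_j by simp
qed (simp add: homog_subst_def)

lemma weq_transform_prod_lin_form:
  assumes "finite J" "card J = 2 * g + 2" "f = smult lam (\<Prod>j\<in>J. lin_form (q j))"
  shows "weq_transform g f a b c d e =
    smult (lam / e ^ 2) (\<Prod>j\<in>J. lin_form (subst_form a b c d (q j)))"
proof -
  have "weq_transform g f a b c d e =
      smult (inverse (e ^ 2)) (homog_subst (card J) f [:b, a:] [:d, c:])"
    unfolding weq_transform_def homog_subst_def using assms(2) by simp
  also have "homog_subst (card J) f [:b, a:] [:d, c:] =
      smult lam (\<Prod>j\<in>J. smult (fst (q j)) [:b, a:] + smult (snd (q j)) [:d, c:])"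
    unfolding assms(3) homog_subst_smult homog_subst_prod_lin_form[OF assms(1)] ..
  also have "(\<Prod>j\<in>J. smult (fst (q j)) [:b, a:] + smult (snd (q j)) [:d, c:]) =
      (\<Prod>j\<in>J. lin_form (subst_form a b c d (q j)))"
    by (rule prod.cong) (auto simp: lin_form_def subst_form_def algebra_simps)
  finally show ?thesis by (simp add: divide_inverse mult.commute)
qed

lemma form_det_subst_form:
  "form_det (subst_form a b c d p) (subst_form a b c d q) = (a * d - b * c) * form_det p q"
  by (simp add: form_det_def subst_form_def algebra_simps)

lemma subst_form_neq_zero:
  assumes "a * d - b * c \<noteq> 0" "p \<noteq> (0, 0)"
  shows "subst_form a b c d p \<noteq> (0, 0)"
proof
  assume zero: "subst_form a b c d p = (0, 0)"
  obtain x y where p: "p = (x, y)" by fastforce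
  have "x * a + y * c = 0" "x * b + y * d = 0"
    using zero p by (simp_all add: subst_form_def)
  moreover have "x * (a * d - b * c) = d * (x * a + y * c) - c * (x * b + y * d)"
       "y * (a * d - b * c) = a * (x * b + y * d) - b * (x * a + y * c)"
    by (simp_all add: algebra_simps)
  ultimately have "x = 0" "y = 0"
    using assms(1) by simp_all
  then show False using assms(2) p by simp
qed

section \<open>The discriminant in terms of linear forms\<close>

lemma rsquarefree_linear_mult:
  assumes "rsquarefree ([:-r, 1:] * q)"
  shows "rsquarefree q" and "poly q r \<noteq> 0"
proof -
  have "[:-r, 1:] * q \<noteq> 0" "q \<noteq> 0" using assms by (auto simp: rsquarefree_def)
  have order: "order x ([:-r, 1:] * q) = order x [:-r, 1:] + order x q" for x
    using order_mult[OF \<open>[:-r, 1:] * q \<noteq> 0\<close>] .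
  have order_le: "order x ([:-r, 1:] * q) \<le> 1" for x
    using assms unfolding rsquarefree_def by (metis le_refl zero_le_one)
  then have "order x q = 0 \<or> order x q = 1" for x
    using order[of x] by (metis add_leD2 le_Suc_eq le_zero_eq One_nat_def)
  then show "rsquarefree q" using \<open>q \<noteq> 0\<close> unfolding rsquarefree_def by blast
  show "poly q r \<noteq> 0"
  proof
    assume "poly q r = 0"
    then have "order r q \<noteq> 0" using \<open>q \<noteq> 0\<close> order_root by blast
    moreover have "order r [:-r, 1:] = 1" using order_power_n_n[of r 1] by simp
    ultimately show False using order[of r] order_le[of r] by linarith
  qed
qed

lemma rsquarefree_splits:
  fixes p :: "'a::field poly"
  assumes "alg_closed TYPE('a)" "rsquarefree p"
  shows "finite (poly_roots p) \<and> p = smult (lead_coeff p) (\<Prod>r\<in>poly_roots p. [:-r, 1:])"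
  using assms(2)
proof (induction "degree p" arbitrary: p rule: less_induct)
  case less
  have "p \<noteq> 0" using less.prems rsquarefree_def by blast
  have fin: "finite (poly_roots p)"
    using poly_roots_finite[OF \<open>p \<noteq> 0\<close>] by (simp add: poly_roots_def)
  show ?case
  proof (cases "degree p = 0")
    case True
    then obtain c where "p = [:c:]" "c \<noteq> 0"
      using \<open>p \<noteq> 0\<close> by (metis degree_0_id pCons_eq_0_iff)
    then show ?thesis by (simp add: poly_roots_def)
  next
    case False
    then obtain r where "poly p r = 0" using assms(1) unfolding alg_closed_def by blast
    then obtain q where p: "p = [:-r, 1:] * q" using poly_eq_0_iff_dvd by (metis dvdE)
    have "q \<noteq> 0" using p \<open>p \<noteq> 0\<close> by auto
    have "rsquarefree q" "poly q r \<noteq> 0"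
      using rsquarefree_linear_mult less.prems unfolding p by blast+
    then have roots: "poly_roots p = insert r (poly_roots q)" "r \<notin> poly_roots q"
      using p by (auto simp: poly_roots_def)
    have "degree p = degree [:-r, 1:] + degree q"
      unfolding p by (rule degree_mult_eq) (use \<open>q \<noteq> 0\<close> in auto)
    then have "degree q < degree p" by simp
    then have IH: "finite (poly_roots q)" "q = smult (lead_coeff q) (\<Prod>r\<in>poly_roots q. [:-r, 1:])"
      using less.hyps \<open>rsquarefree q\<close> by blast+
    have "lead_coeff p = lead_coeff q" unfolding p lead_coeff_mult by simp
    then show ?thesis
      using fin IH roots p by (metis mult_smult_right prod.insert)
  qed
qed

lemma poly_roots_prod_lin: "finite R \<Longrightarrow> poly_roots (\<Prod>r\<in>R. [:-r, 1:]) = R"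
  by (auto simp: poly_roots_def poly_prod)

lemma rsquarefree_prod_lin:
  fixes R :: "'a::field set"
  shows "finite R \<Longrightarrow> rsquarefree (\<Prod>r\<in>R. [:-r, 1:])"
proof (induction R rule: finite_induct)
  case (insert r R)
  let ?P = "\<Prod>r\<in>R. [:-r, 1:]"
  have "?P \<noteq> 0" using insert rsquarefree_def by blast
  then have nz: "[:-r, 1:] * ?P \<noteq> 0" by (metis mult_eq_0_iff pCons_eq_0_iff zero_neq_one)
  have "poly ?P r \<noteq> 0" using insert poly_roots_prod_lin unfolding poly_roots_def by blast
  have "order x [:-r, 1:] + order x ?P \<le> 1" for x
  proof (cases "x = r")
    case True
    then show ?thesis using order_0I[OF \<open>poly ?P r \<noteq> 0\<close>] order_power_n_n[of r 1] by simp
  next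
    case False
    then have "order x [:-r, 1:] = 0" by (intro order_0I) simp
    moreover have "order x ?P = 0 \<or> order x ?P = 1" using insert.IH by (simp add: rsquarefree_def)
    ultimately show ?thesis by auto
  qed
  then have "rsquarefree ([:-r, 1:] * ?P)"
    unfolding rsquarefree_def using nz order_mult[OF nz] by (metis le_Suc_eq le_zero_eq One_nat_def)
  then show ?case using insert by simp
qed (simp add: rsquarefree_def)

lemma disc_monic_prod_lin:
  fixes R :: "'a::field set"
  assumes "finite R"
  shows "disc_monic (\<Prod>r\<in>R. [:-r, 1:]) =
    (-1) ^ (card R * (card R - 1) div 2) * (\<Prod>r\<in>R. \<Prod>r'\<in>R - {r}. (r - r'))"
proof -
  have "degree (\<Prod>r\<in>R. [:-r, 1:]) = card R" by (simp add: degree_prod_sum_eq)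
  then show ?thesis
    using rsquarefree_prod_lin[OF assms] poly_roots_prod_lin[OF assms] by (simp add: disc_monic_def)
qed

lemma sum_pairs_reindex:
  assumes "inj_on \<rho> J"
  shows "(\<Sum>r\<in>\<rho> ` J. \<Sum>r'\<in>\<rho> ` J - {r}. h r r') = (\<Sum>j\<in>J. \<Sum>k\<in>J - {j}. h (\<rho> j) (\<rho> k))"
proof -
  have "\<rho> ` J - {\<rho> j} = \<rho> ` (J - {j})" "inj_on \<rho> (J - {j})" if "j \<in> J" for j
    using assms that by (auto simp: inj_on_def)
  then show ?thesis by (simp add: sum.reindex[OF assms] sum.reindex cong: sum.cong)
qed

lemma sum_pairs_add:
  fixes a :: "'i \<Rightarrow> real"
  assumes "finite J"
  shows "(\<Sum>j\<in>J. \<Sum>k\<in>J - {j}. a j + a k) = 2 * (real (card J) - 1) * (\<Sum>j\<in>J. a j)"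
proof -
  have "(\<Sum>k\<in>J - {j}. a j + a k) = (real (card J) - 1) * a j + ((\<Sum>k\<in>J. a k) - a j)"
    if "j \<in> J" for j
  proof -
    have "1 \<le> card J" using that assms by (auto simp: Suc_le_eq card_gt_0_iff)
    then show ?thesis
      using that assms by (simp add: sum.distrib sum_diff1 card_Diff_singleton of_nat_diff)
  qed
  then have "(\<Sum>j\<in>J. \<Sum>k\<in>J - {j}. a j + a k) =
      (\<Sum>j\<in>J. (real (card J) - 1) * a j + ((\<Sum>k\<in>J. a k) - a j))"
    by (rule sum.cong[OF refl])
  also have "\<dots> = (real (card J) - 1) * (\<Sum>j\<in>J. a j) + (real (card J) * (\<Sum>j\<in>J. a j) - (\<Sum>j\<in>J. a j))"
    by (simp add: sum.distrib sum_subtractf sum_distrib_left)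
  also have "\<dots> = 2 * (real (card J) - 1) * (\<Sum>j\<in>J. a j)"
    by (simp add: algebra_simps)
  finally show ?thesis .
qed

context odd_residue_valuation
begin

lemma v_weq_disc_smult_prod_lin:
  assumes "c \<noteq> 0" "finite R"
  shows "v (weq_disc g (smult c (\<Prod>r\<in>R. [:-r, 1:]))) =
    ereal ((4 * real g + 2) * val c + (\<Sum>r\<in>R. \<Sum>r'\<in>R - {r}. val (r - r')))"
proof -
  let ?h = "smult c (\<Prod>r\<in>R. [:-r, 1:])"
  let ?s = "(-1::'a) ^ (card R * (card R - 1) div 2)"
  let ?P = "\<Prod>r\<in>R. \<Prod>r'\<in>R - {r}. (r - r')"
  have "lead_coeff ?h = c" by (simp add: lead_coeff_prod)
  then have disc: "weq_disc g ?h = 16 ^ g * c ^ (4 * g + 2) * (?s * ?P)"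
    using assms(1) by (simp add: weq_disc_def disc_monic_prod_lin[OF assms(2)])
  have "(16::'a) ^ g = 2 ^ (4 * g)" by (simp add: power_mult)
  then have nonzero: "(16::'a) ^ g \<noteq> 0" "c ^ (4 * g + 2) \<noteq> 0" "?s \<noteq> 0" "?P \<noteq> 0"
    using two_neq_zero assms by (auto simp: prod_zero_iff)
  have "val ?P = (\<Sum>r\<in>R. val (\<Prod>r'\<in>R - {r}. (r - r')))"
    by (rule val_prod) (use assms(2) in \<open>auto simp: prod_zero_iff\<close>)
  also have "\<dots> = (\<Sum>r\<in>R. \<Sum>r'\<in>R - {r}. val (r - r'))"
    by (rule sum.cong[OF refl], rule val_prod) (use assms(2) in auto)
  moreover have "val ?s = 0" by (simp add: val_power)
  ultimately have "val (weq_disc g ?h) = (4 * real g + 2) * val c + (\<Sum>r\<in>R. \<Sum>r'\<in>R - {r}. val (r - r'))"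
    unfolding disc using nonzero assms(1) by (simp add: val_mult val_power val_16_power distrib_right)
  moreover have "weq_disc g ?h \<noteq> 0" unfolding disc using nonzero by simp
  ultimately show ?thesis by (simp add: v_eq_val)
qed

lemma v_weq_disc_prod_lin_form_affine:
  assumes fin: "finite J" and "\<mu> \<noteq> 0"
    and affine: "\<And>j. j \<in> J \<Longrightarrow> fst (q j) \<noteq> 0"
    and det: "\<And>j k. j \<in> J \<Longrightarrow> k \<in> J \<Longrightarrow> j \<noteq> k \<Longrightarrow> form_det (q j) (q k) \<noteq> 0"
  shows "v (weq_disc g (smult \<mu> (\<Prod>j\<in>J. lin_form (q j)))) =
    ereal ((4 * real g + 2) * (val \<mu> + (\<Sum>j\<in>J. val (fst (q j))))
      + (\<Sum>j\<in>J. \<Sum>k\<in>J - {j}. val (form_det (q j) (q k)))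
      - 2 * (real (card J) - 1) * (\<Sum>j\<in>J. val (fst (q j))))"
proof -
  define \<rho> where "\<rho> j = - snd (q j) / fst (q j)" for j
  have det_\<rho>: "form_det (q j) (q k) = fst (q j) * fst (q k) * (\<rho> j - \<rho> k)"
    if "j \<in> J" "k \<in> J" for j k
    using affine that by (simp add: form_det_def \<rho>_def field_simps)
  have inj: "inj_on \<rho> J"
    by (rule inj_onI, rule ccontr) (use det det_\<rho> in auto)
  let ?A = "\<Prod>j\<in>J. fst (q j)"
  have "?A \<noteq> 0" using affine fin by (simp add: prod_zero_iff)
  have "(\<Prod>j\<in>J. lin_form (q j)) = (\<Prod>j\<in>J. smult (fst (q j)) [:- \<rho> j, 1:])"
    using affine by (intro prod.cong) (auto simp: lin_form_def \<rho>_def)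
  also have "\<dots> = smult ?A (\<Prod>r\<in>\<rho> ` J. [:-r, 1:])"
    by (simp only: prod_smult prod.reindex[OF inj] comp_def)
  finally have "v (weq_disc g (smult \<mu> (\<Prod>j\<in>J. lin_form (q j)))) =
      ereal ((4 * real g + 2) * val (\<mu> * ?A) + (\<Sum>r\<in>\<rho> ` J. \<Sum>r'\<in>\<rho> ` J - {r}. val (r - r')))"
    using v_weq_disc_smult_prod_lin[of "\<mu> * ?A" "\<rho> ` J"] \<open>\<mu> \<noteq> 0\<close> \<open>?A \<noteq> 0\<close> fin by simp
  also have "(\<Sum>r\<in>\<rho> ` J. \<Sum>r'\<in>\<rho> ` J - {r}. val (r - r')) = (\<Sum>j\<in>J. \<Sum>k\<in>J - {j}. val (\<rho> j - \<rho> k))"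
    by (rule sum_pairs_reindex[OF inj])
  also have "\<dots> = (\<Sum>j\<in>J. \<Sum>k\<in>J - {j}. val (form_det (q j) (q k)) - (val (fst (q j)) + val (fst (q k))))"
  proof (intro sum.cong refl)
    fix j k assume "j \<in> J" "k \<in> J - {j}"
    then have "k \<in> J" "j \<noteq> k" by auto
    then have "fst (q j) * fst (q k) * (\<rho> j - \<rho> k) \<noteq> 0"
      using det[OF \<open>j \<in> J\<close>] det_\<rho>[OF \<open>j \<in> J\<close>] by metis
    then show "val (\<rho> j - \<rho> k) = val (form_det (q j) (q k)) - (val (fst (q j)) + val (fst (q k)))"
      using \<open>j \<in> J\<close> \<open>k \<in> J - {j}\<close> by (simp add: det_\<rho> val_mult)
  qed
  also have "\<dots> = (\<Sum>j\<in>J. \<Sum>k\<in>J - {j}. val (form_det (q j) (q k)))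
      - 2 * (real (card J) - 1) * (\<Sum>j\<in>J. val (fst (q j)))"
    by (simp only: sum_subtractf sum_pairs_add[OF fin])
  moreover have "val (\<mu> * ?A) = val \<mu> + (\<Sum>j\<in>J. val (fst (q j)))"
    using \<open>\<mu> \<noteq> 0\<close> \<open>?A \<noteq> 0\<close> affine fin by (simp add: val_mult val_prod)
  ultimately show ?thesis by simp
qed

lemma sum_val_form_det_remove_vertical:
  assumes fin: "finite J" and "j0 \<in> J" and q_j0: "q j0 = (0, b0)" and "b0 \<noteq> 0"
    and affine: "\<And>k. k \<in> J - {j0} \<Longrightarrow> fst (q k) \<noteq> 0"
  shows "(\<Sum>j\<in>J. \<Sum>k\<in>J - {j}. val (form_det (q j) (q k))) =
    2 * (\<Sum>j\<in>J - {j0}. val (fst (q j))) + 2 * real (card (J - {j0})) * val b0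
    + (\<Sum>j\<in>J - {j0}. \<Sum>k\<in>J - {j0} - {j}. val (form_det (q j) (q k)))"
proof -
  let ?J' = "J - {j0}"
  have "val (form_det (q j0) (q k)) = val b0 + val (fst (q k))"
    "val (form_det (q k) (q j0)) = val b0 + val (fst (q k))" if "k \<in> ?J'" for k
    using affine[OF that] \<open>b0 \<noteq> 0\<close> q_j0 by (simp_all add: form_det_def val_mult)
  moreover have "J - {j} = insert j0 (?J' - {j})" "j0 \<notin> ?J' - {j}" if "j \<in> ?J'" for j
    using that \<open>j0 \<in> J\<close> by auto
  ultimately have "(\<Sum>j\<in>?J'. \<Sum>k\<in>J - {j}. val (form_det (q j) (q k))) =
      (\<Sum>j\<in>?J'. (val b0 + val (fst (q j))) + (\<Sum>k\<in>?J' - {j}. val (form_det (q j) (q k))))"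
    using fin by (intro sum.cong refl) simp
  moreover have "(\<Sum>k\<in>?J'. val (form_det (q j0) (q k))) = (\<Sum>k\<in>?J'. val b0 + val (fst (q k)))"
    using \<open>\<And>k. k \<in> ?J' \<Longrightarrow> val (form_det (q j0) (q k)) = val b0 + val (fst (q k))\<close>
    by (rule sum.cong[OF refl])
  ultimately show ?thesis
    using sum.remove[OF fin \<open>j0 \<in> J\<close>, of "\<lambda>j. \<Sum>k\<in>J - {j}. val (form_det (q j) (q k))"]
    by (simp add: sum.distrib algebra_simps)
qed

lemma v_weq_disc_prod_lin_form:
  assumes fin: "finite J" and card: "card J = 2 * g + 2" and "lam \<noteq> 0"
    and det: "\<And>j k. j \<in> J \<Longrightarrow> k \<in> J \<Longrightarrow> j \<noteq> k \<Longrightarrow> form_det (q j) (q k) \<noteq> 0"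
  shows "v (weq_disc g (smult lam (\<Prod>j\<in>J. lin_form (q j)))) =
    ereal ((4 * real g + 2) * val lam + (\<Sum>j\<in>J. \<Sum>k\<in>J - {j}. val (form_det (q j) (q k))))"
proof (cases "\<forall>j\<in>J. fst (q j) \<noteq> 0")
  case True
  then show ?thesis
    using v_weq_disc_prod_lin_form_affine[OF fin \<open>lam \<noteq> 0\<close>, of q g] det card
    by (simp add: algebra_simps)
next
  case False
  then obtain j0 b0 where "j0 \<in> J" and q_j0: "q j0 = (0, b0)"
    by (metis prod.collapse)
  let ?J' = "J - {j0}"
  have "card ?J' = 2 * g + 1" using card \<open>j0 \<in> J\<close> fin by simp
  moreover have "card {} \<noteq> 2 * g + 1" by simp
  ultimately have "?J' \<noteq> {}" by metis
  then obtain k0 where "k0 \<in> ?J'" by blast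
  have det_j0: "form_det (q j0) (q k) = - (b0 * fst (q k))" for k
    using q_j0 by (simp add: form_det_def)
  have "b0 \<noteq> 0" and affine: "\<And>k. k \<in> ?J' \<Longrightarrow> fst (q k) \<noteq> 0"
    using det[OF \<open>j0 \<in> J\<close>] \<open>k0 \<in> ?J'\<close> det_j0 by auto
  have "(\<Prod>j\<in>J. lin_form (q j)) = lin_form (q j0) * (\<Prod>j\<in>?J'. lin_form (q j))"
    by (rule prod.remove[OF fin \<open>j0 \<in> J\<close>])
  then have "v (weq_disc g (smult lam (\<Prod>j\<in>J. lin_form (q j)))) =
      v (weq_disc g (smult (lam * b0) (\<Prod>j\<in>?J'. lin_form (q j))))"
    by (simp add: q_j0 lin_form_def)
  also have "\<dots> = ereal ((4 * real g + 2) * (val (lam * b0) + (\<Sum>j\<in>?J'. val (fst (q j))))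
      + (\<Sum>j\<in>?J'. \<Sum>k\<in>?J' - {j}. val (form_det (q j) (q k)))
      - 2 * (real (card ?J') - 1) * (\<Sum>j\<in>?J'. val (fst (q j))))"
    by (rule v_weq_disc_prod_lin_form_affine[where q = q])
      (use fin \<open>lam \<noteq> 0\<close> \<open>b0 \<noteq> 0\<close> affine det in auto)
  also have "\<dots> = ereal ((4 * real g + 2) * val lam + (\<Sum>j\<in>J. \<Sum>k\<in>J - {j}. val (form_det (q j) (q k))))"
  proof -
    have "(\<Sum>j\<in>J. \<Sum>k\<in>J - {j}. val (form_det (q j) (q k))) =
        2 * (\<Sum>j\<in>?J'. val (fst (q j))) + 2 * real (card ?J') * val b0
        + (\<Sum>j\<in>?J'. \<Sum>k\<in>?J' - {j}. val (form_det (q j) (q k)))"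
      by (rule sum_val_form_det_remove_vertical[where q = q, OF fin \<open>j0 \<in> J\<close> q_j0 \<open>b0 \<noteq> 0\<close> affine])
    then show ?thesis
      using \<open>card ?J' = 2 * g + 1\<close> \<open>lam \<noteq> 0\<close> \<open>b0 \<noteq> 0\<close> by (simp add: val_mult algebra_simps)
  qed
  finally show ?thesis .
qed

lemma v_weq_disc_weq_transform:
  assumes fin: "finite J" and card: "card J = 2 * g + 2" and "lam \<noteq> 0"
    and det: "\<And>j k. j \<in> J \<Longrightarrow> k \<in> J \<Longrightarrow> j \<noteq> k \<Longrightarrow> form_det (q j) (q k) \<noteq> 0"
    and f: "f = smult lam (\<Prod>j\<in>J. lin_form (q j))"
    and "a * d - b * c \<noteq> 0" "e \<noteq> 0"
  shows "v (weq_disc g (weq_transform g f a b c d e)) =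
    v (weq_disc g f) + ereal ((4 * real g + 2) * ((real g + 1) * val (a * d - b * c) - 2 * val e))"
proof -
  let ?D = "a * d - b * c"
  let ?S = "\<Sum>j\<in>J. \<Sum>k\<in>J - {j}. val (form_det (q j) (q k))"
  have det': "form_det (subst_form a b c d (q j)) (subst_form a b c d (q k)) \<noteq> 0"
    if "j \<in> J" "k \<in> J" "j \<noteq> k" for j k
    using det[OF that] \<open>?D \<noteq> 0\<close> by (simp add: form_det_subst_form)
  have "(\<Sum>j\<in>J. \<Sum>k\<in>J - {j}. val (form_det (subst_form a b c d (q j)) (subst_form a b c d (q k))))
      = (\<Sum>j\<in>J. \<Sum>k\<in>J - {j}. val ?D + val (form_det (q j) (q k)))"
  proof (intro sum.cong refl)
    fix j k assume "j \<in> J" "k \<in> J - {j}"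
    then have "form_det (q j) (q k) \<noteq> 0" using det[of j k] by blast
    then show "val (form_det (subst_form a b c d (q j)) (subst_form a b c d (q k)))
        = val ?D + val (form_det (q j) (q k))"
      using \<open>?D \<noteq> 0\<close> by (simp add: form_det_subst_form val_mult)
  qed
  also have "\<dots> = (2 * real g + 2) * (2 * real g + 1) * val ?D + ?S"
    using fin card by (simp add: sum.distrib card_Diff_singleton algebra_simps)
  finally have "v (weq_disc g (weq_transform g f a b c d e)) =
      ereal ((4 * real g + 2) * val (lam / e ^ 2) + ((2 * real g + 2) * (2 * real g + 1) * val ?D + ?S))"
    unfolding weq_transform_prod_lin_form[OF fin card f]
    using v_weq_disc_prod_lin_form[OF fin card, of "lam / e ^ 2"] det' \<open>lam \<noteq> 0\<close> \<open>e \<noteq> 0\<close> by simp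
  moreover have "v (weq_disc g f) = ereal ((4 * real g + 2) * val lam + ?S)"
    using v_weq_disc_prod_lin_form[OF fin card \<open>lam \<noteq> 0\<close> det] f by simp
  moreover have "val (lam / e ^ 2) = val lam - 2 * val e"
    using \<open>lam \<noteq> 0\<close> \<open>e \<noteq> 0\<close> by (simp add: val_divide val_power)
  ultimately show ?thesis by (simp add: algebra_simps)
qed

end

section \<open>The minimality criterion\<close>

text \<open>Either every term is at most \<open>D / 2\<close>, or a maximal term exceeds \<open>D / 2\<close> and bounds each
  of the at least \<open>G\<close> terms far from it by \<open>D\<close> minus itself.\<close>

lemma sum_le_of_far_pairs:
  fixes m :: "'i \<Rightarrow> real" and far :: "'i \<Rightarrow> 'i \<Rightarrow> bool"
  assumes fin: "finite J" and card: "card J = 2 * G"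
    and near: "\<And>j. j \<in> J \<Longrightarrow> card {k\<in>J. k = j \<or> \<not> far k j} \<le> G"
    and far: "\<And>j k. j \<in> J \<Longrightarrow> k \<in> J \<Longrightarrow> j \<noteq> k \<Longrightarrow> far k j \<Longrightarrow> m j + m k \<le> D"
  shows "(\<Sum>j\<in>J. m j) \<le> G * D"
proof (cases "J = {}")
  case True
  then show ?thesis using card by simp
next
  case False
  define M where "M = Max (m ` J)"
  have "M \<in> m ` J" unfolding M_def using fin False by (intro Max_in) auto
  then obtain j0 where "j0 \<in> J" "m j0 = M" by auto
  have le_M: "m k \<le> M" if "k \<in> J" for k
    unfolding M_def using fin that by (intro Max_ge) auto
  define S where "S = {k\<in>J. k = j0 \<or> \<not> far k j0}"
  have "S \<subseteq> J" "finite S" "card S \<le> G" using fin near[OF \<open>j0 \<in> J\<close>] by (auto simp: S_def)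
  have outside: "m k \<le> D - M" if "k \<in> J - S" for k
    using far[OF \<open>j0 \<in> J\<close>, of k] that \<open>m j0 = M\<close> by (auto simp: S_def)
  show ?thesis
  proof (cases "2 * M \<le> D")
    case True
    have "(\<Sum>j\<in>J. m j) \<le> (\<Sum>j\<in>J. M)" by (rule sum_mono) (rule le_M)
    also have "\<dots> = real G * (2 * M)" using card by simp
    also have "\<dots> \<le> G * D" using True by (intro mult_left_mono) auto
    finally show ?thesis .
  next
    case False
    have "card (J - S) = 2 * G - card S" using \<open>S \<subseteq> J\<close> \<open>finite S\<close> card by (simp add: card_Diff_subset)
    then have card_diff: "real (card (J - S)) = 2 * real G - real (card S)"
      using \<open>card S \<le> G\<close> by (simp add: of_nat_diff)
    have "(\<Sum>j\<in>J. m j) = (\<Sum>j\<in>S. m j) + (\<Sum>j\<in>J - S. m j)"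
      using sum.subset_diff[OF \<open>S \<subseteq> J\<close> fin] by (simp add: add.commute)
    also have "\<dots> \<le> (\<Sum>j\<in>S. M) + (\<Sum>j\<in>J - S. D - M)"
      using le_M outside \<open>S \<subseteq> J\<close> by (intro add_mono sum_mono) auto
    also have "\<dots> = real (card S) * M + real (card (J - S)) * (D - M)"
      by simp
    also have "\<dots> = 2 * real G * (D - M) + real (card S) * (2 * M - D)"
      unfolding card_diff by (simp add: algebra_simps)
    also have "\<dots> \<le> 2 * real G * (D - M) + real G * (2 * M - D)"
      using \<open>card S \<le> G\<close> False by (intro add_left_mono mult_right_mono) auto
    also have "\<dots> = G * D" by (simp add: algebra_simps)
    finally show ?thesis .
  qed
qed

context odd_residue_valuation
begin

lemma sum_form_content_subst_form_le:
  assumes fin: "finite J" and card: "card J = 2 * g + 2"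
    and nonzero: "\<And>j. j \<in> J \<Longrightarrow> q j \<noteq> (0, 0)"
    and det: "\<And>j k. j \<in> J \<Longrightarrow> k \<in> J \<Longrightarrow> j \<noteq> k \<Longrightarrow> form_det (q j) (q k) \<noteq> 0"
    and near: "\<And>j. j \<in> J \<Longrightarrow> card {k\<in>J. k = j \<or> 0 < val (form_det (q k) (q j))} \<le> g + 1"
    and "a * d - b * c \<noteq> 0"
  shows "(\<Sum>j\<in>J. form_content (subst_form a b c d (q j))) \<le> ereal ((real g + 1) * val (a * d - b * c))"
proof -
  let ?D = "a * d - b * c"
  define m where "m j = real_of_ereal (form_content (subst_form a b c d (q j)))" for j
  have content_m: "form_content (subst_form a b c d (q j)) = ereal (m j)" if "j \<in> J" for j
    using form_content_finite[OF subst_form_neq_zero[OF \<open>?D \<noteq> 0\<close> nonzero[OF that]]]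
    unfolding m_def by (cases "form_content (subst_form a b c d (q j))") auto
  have "m j + m k \<le> val ?D"
    if "j \<in> J" "k \<in> J" "j \<noteq> k" "\<not> 0 < val (form_det (q k) (q j))" for j k
  proof -
    have "ereal (m k + m j) \<le> v (form_det (subst_form a b c d (q k)) (subst_form a b c d (q j)))"
      using form_content_le_v_form_det[of "subst_form a b c d (q k)" "subst_form a b c d (q j)"]
        content_m[OF that(1)] content_m[OF that(2)] by simp
    also have "\<dots> = ereal (val ?D + val (form_det (q k) (q j)))"
      using det[OF that(2,1)] that(3) \<open>?D \<noteq> 0\<close> by (simp add: form_det_subst_form v_eq_val val_mult)
    finally show ?thesis using that(4) by simp
  qed
  then have "(\<Sum>j\<in>J. m j) \<le> real (g + 1) * val ?D"
    by (intro sum_le_of_far_pairs[OF fin, of "g + 1" "\<lambda>k j. \<not> 0 < val (form_det (q k) (q j))"])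
      (use card near in auto)
  moreover have "(\<Sum>j\<in>J. form_content (subst_form a b c d (q j))) = ereal (\<Sum>j\<in>J. m j)"
    using content_m by simp
  ultimately show ?thesis by (simp add: ac_simps)
qed

lemma integral_smult_prod_lin_form_content:
  assumes "finite J" "\<And>j. j \<in> J \<Longrightarrow> q j \<noteq> (0, 0)"
    and "integral_poly v (smult lam (\<Prod>j\<in>J. lin_form (q j)))"
  shows "0 \<le> v lam + (\<Sum>j\<in>J. form_content (q j))"
proof -
  obtain i where "v (coeff (\<Prod>j\<in>J. lin_form (q j)) i) = (\<Sum>j\<in>J. form_content (q j))"
    using has_content_prod_lin_form[where q = q, OF assms(1,2)] unfolding has_content_def by blast
  then show ?thesis
    using assms(3) unfolding integral_poly_def by (metis coeff_smult v_mult)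
qed

theorem minimal_weq_if_prod_lin_form:
  assumes fin: "finite J" and card: "card J = 2 * g + 2"
    and f: "f = smult lam (\<Prod>j\<in>J. lin_form (q j))" and "v lam = 0"
    and nonzero: "\<And>j. j \<in> J \<Longrightarrow> q j \<noteq> (0, 0)"
    and det: "\<And>j k. j \<in> J \<Longrightarrow> k \<in> J \<Longrightarrow> j \<noteq> k \<Longrightarrow> form_det (q j) (q k) \<noteq> 0"
    and near: "\<And>j. j \<in> J \<Longrightarrow> card {k\<in>J. k = j \<or> 0 < val (form_det (q k) (q j))} \<le> g + 1"
    and "integral_poly v f"
  shows "minimal_weq K v g f"
  unfolding minimal_weq_def
proof (intro conjI allI impI)
  fix h assume "K_isomorphic_model K g f h" "integral_poly v h"
  then obtain a b c d e where "a * d - b * c \<noteq> 0" "e \<noteq> 0" and h: "h = weq_transform g f a b c d e"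
    unfolding K_isomorphic_model_def by blast
  have "lam \<noteq> 0" using \<open>v lam = 0\<close> by (cases "lam = 0") simp_all
  have "val lam = 0" using \<open>v lam = 0\<close> by (simp add: val_def)
  then have "v (lam / e ^ 2) = ereal (- 2 * val e)"
    using \<open>lam \<noteq> 0\<close> \<open>e \<noteq> 0\<close> by (simp add: v_eq_val val_divide val_power)
  have "0 \<le> v (lam / e ^ 2) + (\<Sum>j\<in>J. form_content (subst_form a b c d (q j)))"
    using \<open>integral_poly v h\<close> nonzero subst_form_neq_zero[OF \<open>a * d - b * c \<noteq> 0\<close>]
    unfolding h weq_transform_prod_lin_form[OF fin card f]
    by (intro integral_smult_prod_lin_form_content[OF fin]) auto
  also have "\<dots> \<le> ereal (- 2 * val e) + ereal ((real g + 1) * val (a * d - b * c))"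
    unfolding \<open>v (lam / e ^ 2) = ereal (- 2 * val e)\<close>
    by (intro add_left_mono sum_form_content_subst_form_le[OF fin card nonzero det near])
      (use \<open>a * d - b * c \<noteq> 0\<close> in auto)
  finally have "0 \<le> (4 * real g + 2) * ((real g + 1) * val (a * d - b * c) - 2 * val e)"
    by simp
  moreover have "v (weq_disc g h) =
      v (weq_disc g f) + ereal ((4 * real g + 2) * ((real g + 1) * val (a * d - b * c) - 2 * val e))"
    unfolding h by (rule v_weq_disc_weq_transform[OF fin card \<open>lam \<noteq> 0\<close> det f])
      (use \<open>a * d - b * c \<noteq> 0\<close> \<open>e \<noteq> 0\<close> in auto)
  ultimately show "v (weq_disc g f) \<le> v (weq_disc g h)"
    by (cases "v (weq_disc g f)") auto
qed (rule \<open>integral_poly v f\<close>)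

end

section \<open>Roots and clusters\<close>

text \<open>The forms \<open>x - r\<close> for the roots \<open>r\<close> of \<open>f\<close>, together with the constant form \<open>1\<close> standing
  for a root at infinity when \<open>f\<close> has odd degree.\<close>

definition root_form :: "'a::field option \<Rightarrow> 'a \<times> 'a" where
  "root_form j = (case j of None \<Rightarrow> (0, 1) | Some r \<Rightarrow> (1, - r))"

definition root_indices :: "nat \<Rightarrow> 'a::field poly \<Rightarrow> 'a option set" where
  "root_indices g f = Some ` poly_roots f \<union> (if degree f = 2 * g + 1 then {None} else {})"

lemma form_det_root_form [simp]:
  "form_det (root_form (Some r)) (root_form (Some r')) = r - r'"
  "form_det (root_form (Some r)) (root_form None) = 1"
  "form_det (root_form None) (root_form (Some r)) = - 1"
  by (simp_all add: root_form_def form_det_def)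

lemma form_det_root_form_neq_zero: "j \<noteq> k \<Longrightarrow> form_det (root_form j) (root_form k) \<noteq> 0"
  by (cases j; cases k) auto

lemma root_form_neq_zero: "root_form j \<noteq> (0, 0)"
  by (cases j) (auto simp: root_form_def)

lemma prod_lin_form_root_form:
  fixes f :: "'a::field poly"
  assumes "alg_closed TYPE('a)" "rsquarefree f" "degree f = 2 * g + 1 \<or> degree f = 2 * g + 2"
  shows "finite (root_indices g f)" and "card (root_indices g f) = 2 * g + 2"
    and "f = smult (lead_coeff f) (\<Prod>j\<in>root_indices g f. lin_form (root_form j))"
proof -
  let ?R = "poly_roots f"
  let ?J = "root_indices g f"
  have R: "finite ?R" "f = smult (lead_coeff f) (\<Prod>r\<in>?R. [:-r, 1:])"
    using rsquarefree_splits[OF assms(1,2)] by auto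
  have "f \<noteq> 0" using assms(2) by (simp add: rsquarefree_def)
  then have "degree f = degree (\<Prod>r\<in>?R. [:-r, 1:])"
    using arg_cong[OF R(2), of degree] by simp
  then have deg: "degree f = card ?R" by (simp add: degree_prod_sum_eq)
  have prod_Some: "(\<Prod>j\<in>Some ` ?R. lin_form (root_form j)) = (\<Prod>r\<in>?R. [:-r, 1:])"
    by (simp add: prod.reindex root_form_def lin_form_def)
  have "lin_form (root_form None) = 1" by (simp add: root_form_def lin_form_def one_pCons)
  then have "card ?J = 2 * g + 2 \<and> (\<Prod>j\<in>?J. lin_form (root_form j)) = (\<Prod>r\<in>?R. [:-r, 1:])"
    using assms(3) R(1) deg prod_Some by (auto simp: root_indices_def card_image)
  then show "card ?J = 2 * g + 2" "f = smult (lead_coeff f) (\<Prod>j\<in>?J. lin_form (root_form j))"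
    using R(2) by simp_all
  show "finite ?J" using R(1) by (simp add: root_indices_def)
qed

context odd_residue_valuation
begin

lemma d_R_attained:
  assumes "finite (poly_roots f)" "poly_roots f \<noteq> {}"
  obtains r r' where "r \<in> poly_roots f" "r' \<in> poly_roots f" "d_R v f = v (r - r')"
proof -
  have "{v (r - r') | r r'. r \<in> poly_roots f \<and> r' \<in> poly_roots f}
      = (\<lambda>(r, r'). v (r - r')) ` (poly_roots f \<times> poly_roots f)"
    by auto
  then have "d_R v f \<in> (\<lambda>(r, r'). v (r - r')) ` (poly_roots f \<times> poly_roots f)"
    unfolding d_R_def using assms by (auto intro!: Min_in)
  then show ?thesis using that by auto
qed

text \<open>The roots \<open>v\<close>-close to a root \<open>r\<^sub>0\<close> form the disc around \<open>r\<^sub>0\<close> whose radius is the smallest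
  positive valuation of a difference \<open>r - r\<^sub>0\<close>.\<close>

lemma is_cluster_near_roots:
  assumes "finite (poly_roots f)" "r0 \<in> poly_roots f"
  shows "is_cluster v f {r \<in> poly_roots f. r = r0 \<or> 0 < val (r - r0)}"
proof -
  define C where "C = {r \<in> poly_roots f. r = r0 \<or> 0 < val (r - r0)}"
  define d where "d = Min (insert 1 ((\<lambda>r. val (r - r0)) ` (C - {r0})))"
  have "finite C" using assms(1) by (simp add: C_def)
  then have "0 < d" "\<And>r. r \<in> C - {r0} \<Longrightarrow> d \<le> val (r - r0)"
    unfolding d_def by (auto simp: C_def)
  have "r \<in> C \<longleftrightarrow> r \<in> poly_roots f \<and> ereal d \<le> v (r - r0)" for r
  proof (cases "r = r0")
    case False
    then have "v (r - r0) = ereal (val (r - r0))" by (simp add: v_eq_val)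
    then show ?thesis
      using \<open>0 < d\<close> \<open>\<And>r. r \<in> C - {r0} \<Longrightarrow> d \<le> val (r - r0)\<close> False
      by (auto simp: C_def)
  qed (simp add: C_def)
  then have "C = {r \<in> poly_roots f. ereal d \<le> v (r - r0)}" by blast
  then show ?thesis using assms(2) unfolding is_cluster_def C_def by blast
qed

lemma near_roots_neq_roots:
  assumes "finite (poly_roots f)" "r0 \<in> poly_roots f" "d_R v f = 0"
  shows "{r \<in> poly_roots f. r = r0 \<or> 0 < val (r - r0)} \<noteq> poly_roots f"
proof
  assume near: "{r \<in> poly_roots f. r = r0 \<or> 0 < val (r - r0)} = poly_roots f"
  have pos: "0 < v (r - r0)" if "r \<in> poly_roots f" for r
    using near that by (cases "r = r0") (auto simp: v_eq_val)
  have "poly_roots f \<noteq> {}" using assms(2) by blast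
  then obtain r r' where "r \<in> poly_roots f" "r' \<in> poly_roots f" "d_R v f = v (r - r')"
    by (rule d_R_attained[OF assms(1)])
  have "0 < min (v (r - r0)) (v (r' - r0))"
    using pos \<open>r \<in> poly_roots f\<close> \<open>r' \<in> poly_roots f\<close> by simp
  also have "\<dots> \<le> v ((r - r0) - (r' - r0))" by (rule v_diff)
  finally show False using \<open>d_R v f = v (r - r')\<close> assms(3) by simp
qed

lemma card_near_root_forms_le:
  assumes "finite (poly_roots f)" "d_R v f = 0"
    and "\<not> (\<exists>s. is_cluster v f s \<and> s \<noteq> poly_roots f \<and> card s > g + 1)"
    and "j \<in> root_indices g f"
  shows "card {k \<in> root_indices g f. k = j \<or> 0 < val (form_det (root_form k) (root_form j))} \<le> g + 1"
    (is "card ?N \<le> _")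
proof (cases j)
  case None
  then have "?N \<subseteq> {None}" by (auto simp: root_indices_def)
  then have "card ?N \<le> card {None :: 'a option}" by (rule card_mono[rotated]) simp
  then show ?thesis by simp
next
  case (Some r0)
  let ?C = "{r \<in> poly_roots f. r = r0 \<or> 0 < val (r - r0)}"
  have "r0 \<in> poly_roots f" using assms(4) Some by (auto simp: root_indices_def split: if_splits)
  then have "is_cluster v f ?C" "?C \<noteq> poly_roots f"
    using is_cluster_near_roots[OF assms(1)] near_roots_neq_roots[OF assms(1) _ assms(2)] by blast+
  then have "card ?C \<le> g + 1" using assms(3) not_less by blast
  have "?N \<subseteq> Some ` ?C" using Some by (auto simp: root_indices_def)
  then have "card ?N \<le> card (Some ` ?C)" by (rule card_mono[rotated]) (use assms(1) in simp)
  also have "\<dots> = card ?C" by (simp add: card_image)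
  finally show ?thesis using \<open>card ?C \<le> g + 1\<close> by simp
qed

end

theorem theorem17p1:
  fixes K :: "'a::field set" and v :: "'a \<Rightarrow> ereal" and f :: "'a poly" and g :: nat
  assumes "local_field_setup K v"
    and "g \<ge> 2"
    and "set (coeffs f) \<subseteq> K"
    and "integral_poly v f"
    and "rsquarefree f"
    and "degree f = 2 * g + 1 \<or> degree f = 2 * g + 2"
    and "d_R v f = 0"
    and "v (lead_coeff f) = 0"
    and "\<not> (\<exists>s. is_cluster v f s \<and> s \<noteq> poly_roots f \<and> card s > g + 1)"
  shows "minimal_weq K v g f"
proof -
  interpret odd_residue_valuation v
    using assms(1) by unfold_locales (auto simp: local_field_setup_def)
  have "alg_closed TYPE('a)" using assms(1) by (simp add: local_field_setup_def)
  note forms = prod_lin_form_root_form[OF this assms(5,6)]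
  have "finite (poly_roots f)"
    using forms(1) by (auto simp: root_indices_def dest: finite_imageD)
  show ?thesis
    by (rule minimal_weq_if_prod_lin_form[OF forms assms(8) root_form_neq_zero
          form_det_root_form_neq_zero card_near_root_forms_le[OF \<open>finite (poly_roots f)\<close> assms(7,9)]
          assms(4)])
qed

end
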